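(* Let $T$ be a finite tree and let $P=p_0p_1\dots p_k$ ($k\ge1$) be a path in $T$ such that each of $p_1,\dots,p_{k-1}$ has degree $2$ in $T$. Let $B$ be the vertex set of the component containing $p_k$ of the graph obtained from $T$ by deleting the edges of $P$, and assume $B$ is not trivial (i.e. $p_k$ has a neighbour not on $P$). If $k$ is odd, then for every $\ell\ge1$, \[\omega_{\ell}(p_0,T[B\cup P])-\omega_{\ell}(p_0,P)\leq \omega_{\ell-1}(p_k,T[B\cup P])-\omega_{\ell-1}(p_k,P).\]
   Context: $T[B\cup P]$ is the subgraph of $T$ induced by $B\cup\{p_0,\dots,p_k\}$. For a graph $G$, a vertex $x$ and $\ell\ge0$, $\omega_\ell(x,G)$ is the number of walks of length $\ell$ in $G$ starting at $x$. $P$ is regarded as a graph (the path). *)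

theory Defs
  imports Main
begin

definition simple_graph :: "'a set \<Rightarrow> 'a set set \<Rightarrow> bool" where
  "simple_graph V E \<longleftrightarrow> finite V \<and> (\<forall>e\<in>E. \<exists>u v. e = {u, v} \<and> u \<noteq> v \<and> u \<in> V \<and> v \<in> V)"

definition degree :: "'a set set \<Rightarrow> 'a \<Rightarrow> nat" where
  "degree E v = card {e \<in> E. v \<in> e}"

text \<open>Walks of length l: vertex lists of length l+1, consecutive vertices adjacent.\<close>
definition is_walk :: "'a set \<Rightarrow> 'a set set \<Rightarrow> 'a list \<Rightarrow> bool" where
  "is_walk V E xs \<longleftrightarrow> xs \<noteq> [] \<and> set xs \<subseteq> V \<and>
     (\<forall>i. Suc i < length xs \<longrightarrow> {xs ! i, xs ! Suc i} \<in> E)"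

definition walks_count :: "nat \<Rightarrow> 'a \<Rightarrow> 'a set \<Rightarrow> 'a set set \<Rightarrow> nat" where
  "walks_count l x V E = card {xs. is_walk V E xs \<and> length xs = Suc l \<and> hd xs = x}"

definition reachable :: "'a set \<Rightarrow> 'a set set \<Rightarrow> 'a \<Rightarrow> 'a \<Rightarrow> bool" where
  "reachable V E u v \<longleftrightarrow> (\<exists>xs. is_walk V E xs \<and> hd xs = u \<and> last xs = v)"

definition connected_graph :: "'a set \<Rightarrow> 'a set set \<Rightarrow> bool" where
  "connected_graph V E \<longleftrightarrow> V \<noteq> {} \<and> (\<forall>u\<in>V. \<forall>v\<in>V. reachable V E u v)"

definition is_cycle :: "'a set \<Rightarrow> 'a set set \<Rightarrow> 'a list \<Rightarrow> bool" where
  "is_cycle V E xs \<longleftrightarrow> length xs \<ge> 3 \<and> distinct xs \<and> is_walk V E xs \<and> {last xs, hd xs} \<in> E"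

definition acyclic_graph :: "'a set \<Rightarrow> 'a set set \<Rightarrow> bool" where
  "acyclic_graph V E \<longleftrightarrow> (\<nexists>xs. is_cycle V E xs)"

definition is_tree :: "'a set \<Rightarrow> 'a set set \<Rightarrow> bool" where
  "is_tree V E \<longleftrightarrow> simple_graph V E \<and> connected_graph V E \<and> acyclic_graph V E"

definition is_path :: "'a set \<Rightarrow> 'a set set \<Rightarrow> 'a list \<Rightarrow> bool" where
  "is_path V E ps \<longleftrightarrow> is_walk V E ps \<and> distinct ps"

definition path_edges :: "'a list \<Rightarrow> 'a set set" where
  "path_edges ps = {{ps ! i, ps ! Suc i} | i. Suc i < length ps}"

definition component :: "'a set \<Rightarrow> 'a set set \<Rightarrow> 'a \<Rightarrow> 'a set" where
  "component V E v = {u \<in> V. reachable V E v u}"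

definition induced_edges :: "'a set set \<Rightarrow> 'a set \<Rightarrow> 'a set set" where
  "induced_edges E S = {e \<in> E. e \<subseteq> S}"

end

theory Submission
  imports Defs
begin

(*
  Let m = (k + 1) / 2 and let u be a neighbour of p_k in B, so that p_0 ... p_k u is a path;
  put p_(k+1) = u.  As T is a tree and p_1, ..., p_(k-1) have degree 2, the only neighbours of
  p_j (j < k) in B \<union> P are p_(j-1) and p_(j+1).  Each side of the inequality counts the walks
  of T[B \<union> P] that are not walks of P.  Such a walk w_0 w_1 ... w_l from p_0 moves along
  p_0 ... p_(m-1) until its first visit w_t = p_m, which exists as otherwise it would be a walk
  of P.  Reflecting this initial segment by \<sigma>(p_j) = p_(k+1-j), which fixes p_m, and dropping
  w_0 gives the walk \<sigma>(w_1) ... \<sigma>(w_t) w_(t+1) ... w_l from \<sigma>(p_1) = p_k, again not a walk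
  of P.  The map is injective: the reflected segment lies in {p_(m+1), ..., p_k, u}, so t is
  recovered as the first visit to p_m, and \<sigma> is injective.
*)

lemma simple_graph_edgeD:
  assumes "simple_graph V E" "{a, b} \<in> E"
  shows "a \<noteq> b" "a \<in> V" "b \<in> V"
  using assms unfolding simple_graph_def by (fastforce simp: doubleton_eq_iff)+

lemma is_walk_singleton [simp]: "is_walk V E [x] \<longleftrightarrow> x \<in> V"
  unfolding is_walk_def by simp

lemma is_walk_Cons_Cons [simp]:
  "is_walk V E (x # y # zs) \<longleftrightarrow> x \<in> V \<and> {x, y} \<in> E \<and> is_walk V E (y # zs)"
  unfolding is_walk_def by (auto simp: less_Suc_eq_0_disj)

lemma is_walk_subgraph:
  "is_walk V E xs \<Longrightarrow> V \<subseteq> V' \<Longrightarrow> E \<subseteq> E' \<Longrightarrow> is_walk V' E' xs"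
  unfolding is_walk_def by blast

lemma is_walk_induced_edges:
  "is_walk V E xs \<Longrightarrow> set xs \<subseteq> S \<Longrightarrow> is_walk S (induced_edges E S) xs"
  unfolding is_walk_def induced_edges_def by auto

lemma is_walk_take: "is_walk V E xs \<Longrightarrow> 0 < n \<Longrightarrow> is_walk V E (take n xs)"
  unfolding is_walk_def by (auto dest: in_set_takeD)

lemma is_walk_drop: "is_walk V E xs \<Longrightarrow> n < length xs \<Longrightarrow> is_walk V E (drop n xs)"
  unfolding is_walk_def by (auto dest: in_set_dropD)

lemma is_walk_append:
  "is_walk V E xs \<Longrightarrow> is_walk V E ys \<Longrightarrow> last xs = hd ys \<Longrightarrow> is_walk V E (xs @ tl ys)"
proof (induction xs rule: induct_list012)
  case (3 x y zs)
  then show ?case by (cases zs) auto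
qed (auto simp: is_walk_def)

lemma is_walk_distinct:
  assumes "is_walk V E xs"
  obtains ys where "is_walk V E ys" "distinct ys" "hd ys = hd xs" "last ys = last xs"
  using assms
proof (induction xs arbitrary: thesis)
  case (Cons x xs)
  show ?case
  proof (cases xs)
    case Nil
    then show ?thesis using Cons.prems by (intro Cons.prems(1)[of "[x]"]) auto
  next
    case (Cons y zs)
    obtain ys where ys: "is_walk V E ys" "distinct ys" "hd ys = y" "last ys = last xs"
      using Cons.IH Cons.prems(2) \<open>xs = y # zs\<close> by auto
    show ?thesis
    proof (cases "x \<in> set ys")
      case True
      then obtain us vs where ys_split: "ys = us @ x # vs" by (meson split_list)
      have "is_walk V E (x # vs)"
        using is_walk_drop[OF ys(1), of "length us"] by (simp add: ys_split)
      then show ?thesis using Cons.prems(1) ys \<open>xs = y # zs\<close> by (simp add: ys_split)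
    next
      case False
      have "ys \<noteq> []" using ys(1) by (auto simp: is_walk_def)
      then have "is_walk V E (x # ys)"
        using ys Cons.prems(2) \<open>xs = y # zs\<close> by (cases ys) auto
      then show ?thesis using Cons.prems(1) ys False \<open>ys \<noteq> []\<close> \<open>xs = y # zs\<close> by simp
    qed
  qed
qed (simp add: is_walk_def)

lemma acyclic_graph_no_bypass:
  assumes "acyclic_graph V E" "{a, b} \<in> E" "a \<noteq> b"
    and "is_walk V (E - {{a, b}}) xs" "hd xs = b" "last xs = a"
  shows False
proof -
  obtain ys where ys: "is_walk V (E - {{a, b}}) ys" "distinct ys" "hd ys = b" "last ys = a"
    using is_walk_distinct assms(4-6) by metis
  have "ys \<noteq> []" using ys(1) by (simp add: is_walk_def)
  then obtain zs where ys_eq: "ys = b # zs" using ys(3) by (cases ys) auto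
  then obtain c cs where zs_eq: "zs = c # cs"
    using ys(4) \<open>a \<noteq> b\<close> by (cases zs) auto
  have "cs \<noteq> []"
  proof
    assume "cs = []"
    then have "{b, a} \<in> E - {{a, b}}" using ys(1,4) ys_eq zs_eq by simp
    then show False by (simp add: insert_commute)
  qed
  then have "length ys \<ge> 3" using ys_eq zs_eq by (cases cs) auto
  moreover have "is_walk V E ys" using ys(1) is_walk_subgraph by blast
  ultimately have "is_cycle V E ys"
    using ys assms(2) unfolding is_cycle_def by (simp add: insert_commute)
  then show False using assms(1) unfolding acyclic_graph_def by blast
qed

definition walks_from :: "'a set \<Rightarrow> 'a set set \<Rightarrow> nat \<Rightarrow> 'a \<Rightarrow> 'a list set" where
  "walks_from V E l x = {xs. is_walk V E xs \<and> length xs = Suc l \<and> hd xs = x}"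

lemma walks_count_eq_card: "walks_count l x V E = card (walks_from V E l x)"
  unfolding walks_count_def walks_from_def ..

lemma finite_walks_from: "finite V \<Longrightarrow> finite (walks_from V E l x)"
  unfolding walks_from_def is_walk_def
  by (rule finite_subset[OF _ finite_lists_length_eq]) auto

lemma walks_from_mono:
  "V' \<subseteq> V \<Longrightarrow> E' \<subseteq> E \<Longrightarrow> walks_from V' E' l x \<subseteq> walks_from V E l x"
  unfolding walks_from_def using is_walk_subgraph by blast

lemma walks_count_subgraph:
  assumes "finite V" "V' \<subseteq> V" "E' \<subseteq> E"
  shows "int (walks_count l x V E) - int (walks_count l x V' E')
    = int (card (walks_from V E l x - walks_from V' E' l x))"
proof -
  have "walks_from V' E' l x \<subseteq> walks_from V E l x" using assms(2,3) by (rule walks_from_mono)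
  moreover have "finite (walks_from V E l x)" using assms(1) by (rule finite_walks_from)
  ultimately show ?thesis
    by (simp add: walks_count_eq_card card_Diff_subset card_mono finite_subset of_nat_diff)
qed

locale bare_path_in_tree =
  fixes V :: "'a set" and E :: "'a set set" and ps :: "'a list" and k :: nat and B :: "'a set"
  assumes tree: "is_tree V E"
    and path: "is_path V E ps" and length_ps: "length ps = Suc k" and k_pos: "k \<ge> 1"
    and inner_degree: "\<forall>i. 1 \<le> i \<and> i \<le> k - 1 \<longrightarrow> degree E (ps ! i) = 2"
    and B_def: "B = component V (E - path_edges ps) (ps ! k)"
begin

abbreviation "BP \<equiv> B \<union> set ps"
abbreviation "EBP \<equiv> induced_edges E BP"

abbreviation off_path_walks :: "nat \<Rightarrow> 'a \<Rightarrow> 'a list set" where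
  "off_path_walks l x \<equiv> walks_from BP EBP l x - walks_from (set ps) (path_edges ps) l x"

lemma simple: "simple_graph V E" and acyclic: "acyclic_graph V E" and finite_V: "finite V"
  using tree unfolding is_tree_def simple_graph_def by auto

lemma walk_ps: "is_walk V E ps" and distinct_ps: "distinct ps"
  using path unfolding is_path_def by auto

lemma nth_ps_eq_iff: "i \<le> k \<Longrightarrow> j \<le> k \<Longrightarrow> ps ! i = ps ! j \<longleftrightarrow> i = j"
  using distinct_ps length_ps by (simp add: nth_eq_iff_index_eq)

lemma path_edgesI: "i < k \<Longrightarrow> {ps ! i, ps ! Suc i} \<in> path_edges ps"
  using length_ps unfolding path_edges_def by auto

lemma path_edgesE:
  assumes "e \<in> path_edges ps"
  obtains i where "i < k" "e = {ps ! i, ps ! Suc i}"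
  using assms length_ps unfolding path_edges_def by auto

lemma path_edges_subset: "path_edges ps \<subseteq> E"
  using walk_ps unfolding path_edges_def is_walk_def by auto

lemma path_edges_subset_EBP: "path_edges ps \<subseteq> EBP"
  using path_edges_subset unfolding path_edges_def induced_edges_def by auto

lemma B_subset_V: "B \<subseteq> V"
  unfolding B_def component_def by auto

lemma finite_BP: "finite BP"
  using finite_V B_subset_V walk_ps finite_subset unfolding is_walk_def by auto

lemma in_B_iff: "w \<in> B \<longleftrightarrow> w \<in> V \<and> reachable V (E - path_edges ps) (ps ! k) w"
  unfolding B_def component_def by auto

lemma last_in_B: "ps ! k \<in> B"
proof -
  have "ps ! k \<in> V" using walk_ps length_ps unfolding is_walk_def by auto
  then show ?thesis unfolding in_B_iff reachable_def by (auto intro!: exI[of _ "[ps ! k]"])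
qed

lemma inner_neighbour:
  assumes "1 \<le> j" "j < k" "{ps ! j, w} \<in> E"
  shows "w = ps ! (j - 1) \<or> w = ps ! Suc j"
proof -
  let ?e1 = "{ps ! j, ps ! (j - 1)}" and ?e2 = "{ps ! j, ps ! Suc j}"
  have "?e1 \<in> E" "?e2 \<in> E"
    using path_edgesI[of "j - 1"] path_edgesI[of j] path_edges_subset assms
    by (auto simp: insert_commute)
  moreover have "?e1 \<noteq> ?e2"
    using nth_ps_eq_iff[of "j - 1" "Suc j"] assms(1,2) by (auto simp: doubleton_eq_iff)
  moreover have "card {e \<in> E. ps ! j \<in> e} = 2"
    using inner_degree assms unfolding degree_def by auto
  ultimately have edges_at_j: "{?e1, ?e2} = {e \<in> E. ps ! j \<in> e}"
    by (intro card_subset_eq) (simp_all add: card_ge_0_finite)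
  have "{ps ! j, w} \<in> {?e1, ?e2}" using assms(3) by (simp only: edges_at_j) simp
  moreover have "w \<noteq> ps ! j" using simple_graph_edgeD(1)[OF simple assms(3)] by simp
  ultimately show ?thesis by (auto simp: doubleton_eq_iff)
qed

lemma tl_path_avoids_first_edge: "is_walk V (E - {{ps ! 0, ps ! 1}}) (tl ps)"
proof -
  have "is_walk V E (tl ps)" using walk_ps k_pos length_ps is_walk_drop[of V E ps 1] by (simp add: drop_Suc)
  then have "is_walk (set (tl ps)) (induced_edges E (set (tl ps))) (tl ps)" "set (tl ps) \<subseteq> V"
    by (auto intro!: is_walk_induced_edges[of V E]) (auto simp: is_walk_def)
  moreover have "ps ! 0 \<notin> set (tl ps)" using distinct_ps length_ps by (cases ps) auto
  then have "induced_edges E (set (tl ps)) \<subseteq> E - {{ps ! 0, ps ! 1}}"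
    by (auto simp: induced_edges_def)
  ultimately show ?thesis by (rule is_walk_subgraph)
qed

lemma walk_avoiding_first_edge:
  assumes "w \<in> BP" "w \<noteq> ps ! 0"
  obtains xs where "is_walk V (E - {{ps ! 0, ps ! 1}}) xs" "hd xs = ps ! 1" "last xs = w"
proof (cases "w \<in> set ps")
  case True
  then obtain i where i: "i \<le> k" "w = ps ! i" using length_ps by (metis in_set_conv_nth less_Suc_eq_le)
  with assms(2) have "0 < i" by (auto intro: Nat.gr0I)
  have length_take: "length (take i (tl ps)) = i" using length_ps i(1) by simp
  moreover have "take i (tl ps) \<noteq> []"
  proof
    assume "take i (tl ps) = []"
    then show False using length_take \<open>0 < i\<close> by simp
  qed
  ultimately show ?thesis
    using that is_walk_take[OF tl_path_avoids_first_edge \<open>0 < i\<close>] i \<open>0 < i\<close>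
    by (simp add: hd_conv_nth last_conv_nth nth_tl)
next
  case False
  with assms(1) have "w \<in> B" by simp
  then obtain rw where rw: "is_walk V (E - path_edges ps) rw" "hd rw = ps ! k" "last rw = w"
    unfolding in_B_iff reachable_def by blast
  have "{ps ! 0, ps ! 1} \<in> path_edges ps" using path_edgesI[of 0] k_pos by simp
  then have "E - path_edges ps \<subseteq> E - {{ps ! 0, ps ! 1}}" by blast
  with rw(1) have walk_rw: "is_walk V (E - {{ps ! 0, ps ! 1}}) rw"
    by (rule is_walk_subgraph[OF _ order_refl])
  obtain p qs where ps_eq: "ps = p # qs" using length_ps by (cases ps) auto
  with length_ps have "length qs = k" by simp
  with k_pos have "tl ps \<noteq> []" by (auto simp: ps_eq)
  then have ends: "hd (tl ps) = ps ! 1" "last (tl ps) = ps ! k"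
    using \<open>length qs = k\<close> by (auto simp: ps_eq hd_conv_nth last_conv_nth nth_Cons')
  have "rw \<noteq> []" using rw(1) by (simp add: is_walk_def)
  show ?thesis
  proof (rule that)
    show "is_walk V (E - {{ps ! 0, ps ! 1}}) (tl ps @ tl rw)"
      using is_walk_append[OF tl_path_avoids_first_edge walk_rw] ends rw(2) by simp
    show "hd (tl ps @ tl rw) = ps ! 1" using ends \<open>tl ps \<noteq> []\<close> by simp
    show "last (tl ps @ tl rw) = w"
      using ends \<open>rw \<noteq> []\<close> rw(2,3) by (cases rw) auto
  qed
qed

lemma first_neighbour:
  assumes "{ps ! 0, w} \<in> E" "w \<in> BP"
  shows "w = ps ! 1"
proof (rule ccontr)
  assume "w \<noteq> ps ! 1"
  let ?E' = "E - {{ps ! 0, ps ! 1}}"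
  have "w \<noteq> ps ! 0" "ps ! 0 \<in> V" "w \<in> V" using simple_graph_edgeD[OF simple assms(1)] by auto
  then obtain xs where xs: "is_walk V ?E' xs" "hd xs = ps ! 1" "last xs = w"
    using walk_avoiding_first_edge assms(2) by metis
  have "{w, ps ! 0} \<in> ?E'"
    using assms(1) \<open>w \<noteq> ps ! 0\<close> \<open>w \<noteq> ps ! 1\<close> by (auto simp: doubleton_eq_iff insert_commute)
  then have "is_walk V ?E' [w, ps ! 0]" using \<open>ps ! 0 \<in> V\<close> \<open>w \<in> V\<close> by simp
  then have "is_walk V ?E' (xs @ [ps ! 0])" using is_walk_append[OF xs(1)] xs(3) by fastforce
  moreover have "hd (xs @ [ps ! 0]) = ps ! 1" using xs(1,2) by (cases xs) (auto simp: is_walk_def)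
  moreover have "{ps ! 0, ps ! 1} \<in> E" using path_edgesI[of 0] path_edges_subset k_pos by auto
  moreover have "ps ! 0 \<noteq> ps ! 1" using nth_ps_eq_iff[of 0 1] k_pos by simp
  ultimately show False using acyclic_graph_no_bypass[OF acyclic] by (metis last_snoc)
qed

lemma path_neighbour:
  assumes "j < k" "{ps ! j, w} \<in> E" "w \<in> BP"
  shows "(0 < j \<and> w = ps ! (j - 1)) \<or> w = ps ! Suc j"
  using first_neighbour inner_neighbour assms by (cases "j = 0") auto

lemma branch_neighbour_exists:
  assumes "B \<noteq> {ps ! k}"
  obtains u where "u \<in> B" "{ps ! k, u} \<in> E" "u \<notin> set ps"
proof -
  obtain w where "w \<in> B" "w \<noteq> ps ! k" using assms last_in_B by blast
  then obtain rw where rw: "is_walk V (E - path_edges ps) rw" "hd rw = ps ! k" "last rw = w"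
    unfolding in_B_iff reachable_def by blast
  then obtain u rest where rw_eq: "rw = ps ! k # u # rest"
    using \<open>w \<noteq> ps ! k\<close> by (cases rw; cases "tl rw") (auto simp: is_walk_def)
  then have walk_ku: "is_walk V (E - path_edges ps) [ps ! k, u]"
    using is_walk_take[OF rw(1), of 2] by simp
  then have edge: "{ps ! k, u} \<in> E" "{ps ! k, u} \<notin> path_edges ps" by auto
  have "reachable V (E - path_edges ps) (ps ! k) u"
    unfolding reachable_def using walk_ku by (intro exI[of _ "[ps ! k, u]"]) simp
  then have "u \<in> B" using simple_graph_edgeD(3)[OF simple edge(1)] by (simp add: in_B_iff)
  moreover have "u \<notin> set ps"
  proof
    assume "u \<in> set ps"
    then obtain j where j: "j \<le> k" "u = ps ! j" using length_ps by (metis in_set_conv_nth less_Suc_eq_le)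
    moreover have "u \<noteq> ps ! k" using simple_graph_edgeD(1)[OF simple edge(1)] by simp
    ultimately have "j < k" using le_neq_implies_less by blast
    moreover have "{ps ! j, ps ! k} \<in> E" using edge(1) j(2) by (simp add: insert_commute)
    ultimately have "k = Suc j"
      using path_neighbour[of j "ps ! k"] last_in_B nth_ps_eq_iff by auto
    then show False using edge(2) path_edgesI[of j] j(2) by (simp add: insert_commute)
  qed
  ultimately show ?thesis using edge(1) that by blast
qed

lemma walk_step_from_path:
  assumes "is_walk BP EBP W" "Suc i < length W" "W ! i = ps ! j" "j < k"
  shows "(0 < j \<and> W ! Suc i = ps ! (j - 1)) \<or> W ! Suc i = ps ! Suc j"
    and "{W ! i, W ! Suc i} \<in> path_edges ps"
proof -
  have "{W ! i, W ! Suc i} \<in> EBP" using assms(1,2) by (simp add: is_walk_def)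
  then have "{ps ! j, W ! Suc i} \<in> E" "W ! Suc i \<in> BP"
    using assms(3) by (auto simp: induced_edges_def)
  then show step: "(0 < j \<and> W ! Suc i = ps ! (j - 1)) \<or> W ! Suc i = ps ! Suc j"
    using path_neighbour assms(4) by blast
  then show "{W ! i, W ! Suc i} \<in> path_edges ps"
    using path_edgesI[of j] path_edgesI[of "j - 1"] assms(3,4) by (auto simp: insert_commute)
qed

end

locale bare_path_reflection = bare_path_in_tree +
  fixes u :: 'a
  assumes u_in_B: "u \<in> B" and u_edge: "{ps ! k, u} \<in> E" and u_off_path: "u \<notin> set ps"
    and odd_k: "odd k"
begin

definition mid :: nat where "mid = Suc k div 2"

lemma Suc_k_eq_twice_mid: "Suc k = 2 * mid" and mid_pos: "0 < mid" and mid_le_k: "mid \<le> k"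
  using odd_k k_pos unfolding mid_def by (auto elim!: oddE)

lemma extended_path: "is_walk BP EBP (ps @ [u])" "distinct (ps @ [u])"
proof -
  have "is_walk BP EBP ps" using walk_ps by (rule is_walk_induced_edges) simp
  moreover have "is_walk BP EBP [ps ! k, u]"
    using u_edge u_in_B length_ps by (simp add: induced_edges_def)
  moreover have "last ps = ps ! k" using length_ps last_conv_nth[of ps] by force
  ultimately show "is_walk BP EBP (ps @ [u])" using is_walk_append by fastforce
  show "distinct (ps @ [u])" using distinct_ps u_off_path by simp
qed

(* The reflection p_j \<mapsto> p_(k+1-j) of the path ps @ [u]; only its values on vertices of P
   matter. *)
definition mirror :: "'a \<Rightarrow> 'a" where
  "mirror v = (ps @ [u]) ! (Suc k - (THE j. j \<le> k \<and> ps ! j = v))"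

lemma mirror_nth: "j \<le> k \<Longrightarrow> mirror (ps ! j) = (ps @ [u]) ! (Suc k - j)"
  unfolding mirror_def using nth_ps_eq_iff by (subst the_equality) auto

lemma mirror_mid: "mirror (ps ! mid) = ps ! mid"
  using mirror_nth[of mid] Suc_k_eq_twice_mid mid_le_k length_ps by (simp add: nth_append)

lemma mirror_inj: "i \<le> k \<Longrightarrow> j \<le> k \<Longrightarrow> mirror (ps ! i) = mirror (ps ! j) \<Longrightarrow> i = j"
  using extended_path(2) length_ps by (simp add: mirror_nth nth_eq_iff_index_eq)

lemma mirror_in_BP:
  assumes "j \<le> k" shows "mirror (ps ! j) \<in> BP"
proof -
  have "(ps @ [u]) ! (Suc k - j) \<in> set (ps @ [u])" using length_ps by (intro nth_mem) simp
  then show ?thesis using extended_path(1) assms by (auto simp: mirror_nth is_walk_def)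
qed

lemma mirror_path_edge:
  assumes "i \<le> k" "j \<le> k" "{ps ! i, ps ! j} \<in> path_edges ps"
  shows "{mirror (ps ! i), mirror (ps ! j)} \<in> EBP"
proof -
  obtain n where n: "n < k" "{ps ! i, ps ! j} = {ps ! n, ps ! Suc n}"
    using assms(3) by (rule path_edgesE)
  then have "{i, j} = {n, Suc n}"
    using assms(1,2) nth_ps_eq_iff by (auto simp: doubleton_eq_iff)
  moreover have "{(ps @ [u]) ! (k - n), (ps @ [u]) ! Suc (k - n)} \<in> EBP"
    using extended_path(1) n(1) length_ps unfolding is_walk_def by auto
  moreover have index_shift: "Suc k - n = Suc (k - n)" "Suc k - Suc n = k - n" using n(1) by auto
  ultimately show ?thesis
    using assms(1,2) n(1) by (auto simp only: doubleton_eq_iff mirror_nth index_shift insert_commute)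
qed

lemma walk_before_mid:
  assumes "is_walk BP EBP W" "hd W = ps ! 0" "i < length W" "\<forall>i'\<le>i. W ! i' \<noteq> ps ! mid"
  shows "\<exists>j<mid. W ! i = ps ! j"
  using assms(3,4)
proof (induction i)
  case 0
  have "W ! 0 = ps ! 0" using assms(1,2) by (cases W) (auto simp: is_walk_def)
  then show ?case using mid_pos by blast
next
  case (Suc i)
  then obtain j where j: "j < mid" "W ! i = ps ! j" by auto
  have "W ! Suc i \<noteq> ps ! mid" using Suc.prems(2) by blast
  from walk_step_from_path(1)[OF assms(1) Suc.prems(1) j(2)] j(1) mid_le_k
  consider "0 < j" "W ! Suc i = ps ! (j - 1)" | "W ! Suc i = ps ! Suc j" by auto
  then show ?case
  proof cases
    case 1
    then show ?thesis using j(1) by (intro exI[of _ "j - 1"]) auto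
  next
    case 2
    then have "Suc j \<noteq> mid" using \<open>W ! Suc i \<noteq> ps ! mid\<close> by auto
    then show ?thesis using 2 j(1) by (intro exI[of _ "Suc j"]) auto
  qed
qed

lemma off_path_walk_visits_mid:
  assumes "W \<in> off_path_walks l (ps ! 0)"
  shows "\<exists>i<length W. W ! i = ps ! mid"
proof (rule ccontr)
  assume no_mid: "\<not> ?thesis"
  have W: "is_walk BP EBP W" "hd W = ps ! 0" "\<not> is_walk (set ps) (path_edges ps) W"
    using assms unfolding walks_from_def by auto
  have before: "\<exists>j<mid. W ! i = ps ! j" if "i < length W" for i
    using walk_before_mid[OF W(1,2) that] no_mid that by auto
  have "is_walk (set ps) (path_edges ps) W"
    unfolding is_walk_def
  proof (intro conjI allI impI)
    show "W \<noteq> []" using W(1) by (simp add: is_walk_def)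
    show "set W \<subseteq> set ps"
    proof
      fix x assume "x \<in> set W"
      then obtain i where "i < length W" "x = W ! i" by (auto simp: in_set_conv_nth)
      with before obtain j where "j < mid" "x = ps ! j" by blast
      then show "x \<in> set ps" using mid_le_k length_ps by simp
    qed
    fix i assume "Suc i < length W"
    moreover obtain j where "j < mid" "W ! i = ps ! j"
      using before[of i] \<open>Suc i < length W\<close> by auto
    ultimately show "{W ! i, W ! Suc i} \<in> path_edges ps"
      using walk_step_from_path(2)[OF W(1)] mid_le_k by simp
  qed
  then show False using W(3) by blast
qed

definition hitting_time :: "'a list \<Rightarrow> nat" where
  "hitting_time W = (LEAST i. W ! i = ps ! mid)"

lemma hitting_time:
  assumes "W \<in> off_path_walks l (ps ! 0)"
  shows "hitting_time W < length W" "W ! hitting_time W = ps ! mid" "0 < hitting_time W"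
proof -
  obtain i where i: "i < length W" "W ! i = ps ! mid"
    using off_path_walk_visits_mid[OF assms] by blast
  show "W ! hitting_time W = ps ! mid" unfolding hitting_time_def using i(2) by (rule LeastI)
  moreover have "hitting_time W \<le> i" unfolding hitting_time_def using i(2) by (rule Least_le)
  then show "hitting_time W < length W" using i(1) by simp
  have "W ! 0 = ps ! 0" using assms by (cases W) (auto simp: walks_from_def is_walk_def)
  then have "W ! 0 \<noteq> ps ! mid" using nth_ps_eq_iff[of 0 mid] mid_pos mid_le_k by simp
  ultimately show "0 < hitting_time W" by (metis gr0I)
qed

lemma before_hitting_time:
  assumes "W \<in> off_path_walks l (ps ! 0)" "i < hitting_time W"
  shows "\<exists>j<mid. W ! i = ps ! j" and "{W ! i, W ! Suc i} \<in> path_edges ps"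
proof -
  have W: "is_walk BP EBP W" "hd W = ps ! 0" using assms(1) unfolding walks_from_def by auto
  have "\<forall>i'\<le>i. W ! i' \<noteq> ps ! mid"
    using assms(2) not_less_Least[of _ "\<lambda>i. W ! i = ps ! mid"] unfolding hitting_time_def
    by (meson le_less_trans)
  then show before: "\<exists>j<mid. W ! i = ps ! j"
    using walk_before_mid[OF W] hitting_time(1)[OF assms(1)] assms(2) by simp
  have "Suc i < length W" using hitting_time(1)[OF assms(1)] assms(2) by simp
  then show "{W ! i, W ! Suc i} \<in> path_edges ps"
    using before walk_step_from_path(2)[OF W(1)] mid_le_k by force
qed

lemma up_to_hitting_time:
  assumes "W \<in> off_path_walks l (ps ! 0)" "i \<le> hitting_time W"
  shows "\<exists>j\<le>mid. W ! i = ps ! j"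
proof (cases "i < hitting_time W")
  case True
  then obtain j where "j < mid" "W ! i = ps ! j" using before_hitting_time(1)[OF assms(1)] by blast
  then show ?thesis by (intro exI[of _ j]) simp
next
  case False
  then show ?thesis using assms(2) hitting_time(2)[OF assms(1)] by auto
qed

definition reflect :: "'a list \<Rightarrow> 'a list" where
  "reflect W = map (\<lambda>i. if i \<le> hitting_time W then mirror (W ! i) else W ! i) [1..<length W]"

lemma length_reflect: "length (reflect W) = length W - 1"
  by (simp add: reflect_def)

lemma nth_reflect:
  "Suc i < length W \<Longrightarrow>
    reflect W ! i = (if Suc i \<le> hitting_time W then mirror (W ! Suc i) else W ! Suc i)"
  by (simp add: reflect_def)

lemma nth_reflect_from_hitting_time:
  assumes "W \<in> off_path_walks l (ps ! 0)" "hitting_time W \<le> Suc i" "Suc i < length W"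
  shows "reflect W ! i = W ! Suc i"
  using nth_reflect[OF assms(3)] hitting_time(2)[OF assms(1)] mirror_mid assms(2)
  by (cases "Suc i = hitting_time W") auto

lemma set_reflect_subset:
  assumes "W \<in> off_path_walks l (ps ! 0)"
  shows "set (reflect W) \<subseteq> BP"
proof
  fix x assume "x \<in> set (reflect W)"
  then obtain i where "i < length (reflect W)" "x = reflect W ! i" by (auto simp: in_set_conv_nth)
  then have i: "Suc i < length W" "x = reflect W ! i" by (auto simp: length_reflect)
  show "x \<in> BP"
  proof (cases "Suc i \<le> hitting_time W")
    case True
    then obtain j where "j \<le> mid" "W ! Suc i = ps ! j" using up_to_hitting_time[OF assms] by blast
    then show ?thesis using i True nth_reflect mirror_in_BP mid_le_k by auto
  next
    case False
    then have "x = W ! Suc i" using i nth_reflect by simp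
    moreover have "W ! Suc i \<in> set W" using i(1) by (intro nth_mem) simp
    ultimately show ?thesis using assms by (auto simp: walks_from_def is_walk_def)
  qed
qed

lemma reflect_walk:
  assumes "W \<in> off_path_walks l (ps ! 0)" "1 \<le> l"
  shows "is_walk BP EBP (reflect W)"
  unfolding is_walk_def
proof (intro conjI allI impI)
  have W: "is_walk BP EBP W" "length W = Suc l" using assms(1) unfolding walks_from_def by auto
  then have "length (reflect W) = l" by (simp add: length_reflect)
  with assms(2) show "reflect W \<noteq> []" by auto
  show "set (reflect W) \<subseteq> BP" using assms(1) by (rule set_reflect_subset)
  fix i assume "Suc i < length (reflect W)"
  then have i: "Suc (Suc i) < length W" by (simp add: length_reflect)
  show "{reflect W ! i, reflect W ! Suc i} \<in> EBP"
  proof (cases "Suc (Suc i) \<le> hitting_time W")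
    case True
    obtain j where j: "j < mid" "W ! Suc i = ps ! j"
      using before_hitting_time(1)[OF assms(1), of "Suc i"] True by auto
    obtain j' where j': "j' \<le> mid" "W ! Suc (Suc i) = ps ! j'"
      using up_to_hitting_time[OF assms(1) True] by blast
    have "{ps ! j, ps ! j'} \<in> path_edges ps"
      using before_hitting_time(2)[OF assms(1), of "Suc i"] True j j' by simp
    then have "{mirror (ps ! j), mirror (ps ! j')} \<in> EBP" using mirror_path_edge j j' mid_le_k by simp
    then show ?thesis using nth_reflect i True j j' by simp
  next
    case False
    then have "reflect W ! i = W ! Suc i" "reflect W ! Suc i = W ! Suc (Suc i)"
      using nth_reflect_from_hitting_time[OF assms(1)] i by auto
    then show ?thesis using W(1) i by (simp add: is_walk_def)
  qed
qed

lemma hd_reflect: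
  assumes "W \<in> off_path_walks l (ps ! 0)" "1 \<le> l"
  shows "hd (reflect W) = ps ! k"
proof -
  have W0: "is_walk BP EBP W" "length W = Suc l" "hd W = ps ! 0"
    using assms(1) by (auto simp: walks_from_def)
  then have "W \<noteq> []" by auto
  then have W: "is_walk BP EBP W" "Suc 0 < length W" "W ! 0 = ps ! 0"
    using W0 assms(2) by (simp_all add: hd_conv_nth)
  then have "W ! 1 = ps ! 1" using walk_step_from_path(1)[OF W(1) W(2) W(3)] k_pos by simp
  moreover have "1 \<le> hitting_time W" using hitting_time(3)[OF assms(1)] by simp
  ultimately have "reflect W ! 0 = mirror (ps ! 1)" using nth_reflect[OF W(2)] by simp
  also have "\<dots> = ps ! k" using mirror_nth[of 1] k_pos length_ps by (simp add: nth_append)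
  finally have "reflect W ! 0 = ps ! k" .
  moreover have "0 < length (reflect W)" using W(2) by (simp add: length_reflect)
  ultimately show ?thesis by (simp add: hd_conv_nth)
qed

lemma reflect_off_path:
  assumes "W \<in> off_path_walks l (ps ! 0)"
  shows "\<not> is_walk (set ps) (path_edges ps) (reflect W)"
proof
  assume R: "is_walk (set ps) (path_edges ps) (reflect W)"
  let ?t = "hitting_time W"
  have late: "W ! i = reflect W ! (i - 1)" "i - 1 < length (reflect W)"
    if "?t \<le> i" "i < length W" for i
    using nth_reflect_from_hitting_time[OF assms, of "i - 1"] hitting_time(3)[OF assms] that
    by (auto simp: length_reflect)
  have "is_walk (set ps) (path_edges ps) W"
    unfolding is_walk_def
  proof (intro conjI allI impI)
    show "W \<noteq> []" using assms by (auto simp: walks_from_def)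
    show "set W \<subseteq> set ps"
    proof
      fix x assume "x \<in> set W"
      then obtain i where i: "i < length W" "x = W ! i" by (auto simp: in_set_conv_nth)
      show "x \<in> set ps"
      proof (cases "i < ?t")
        case True
        then show ?thesis using before_hitting_time(1)[OF assms True] i mid_le_k length_ps by auto
      next
        case False
        then show ?thesis using late[of i] i R by (auto simp: is_walk_def)
      qed
    qed
    fix i assume i: "Suc i < length W"
    show "{W ! i, W ! Suc i} \<in> path_edges ps"
    proof (cases "i < ?t")
      case True
      then show ?thesis using before_hitting_time(2)[OF assms] by blast
    next
      case False
      then have "W ! i = reflect W ! (i - 1)" "W ! Suc i = reflect W ! Suc (i - 1)"
        "Suc (i - 1) < length (reflect W)"
        using late[of i] late[of "Suc i"] i hitting_time(3)[OF assms] by auto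
      then show ?thesis using R by (simp add: is_walk_def)
    qed
  qed
  then show False using assms by (auto simp: walks_from_def)
qed

(* The reflected initial segment avoids p_mid, so reflect W first visits p_mid at index
   hitting_time W - 1. *)
lemma reflect_hitting_time_mono:
  assumes "W \<in> off_path_walks l (ps ! 0)" "W' \<in> off_path_walks l (ps ! 0)"
    and "reflect W = reflect W'"
  shows "hitting_time W \<le> hitting_time W'"
proof (rule ccontr)
  assume "\<not> ?thesis"
  then have lt: "hitting_time W' < hitting_time W" by simp
  define i where "i = hitting_time W' - 1"
  have i: "Suc i = hitting_time W'" using hitting_time(3)[OF assms(2)] by (simp add: i_def)
  have "Suc i < length W'" "Suc i < length W" using hitting_time(1) assms(1,2) lt i by fastforce+
  then have "reflect W' ! i = ps ! mid"
    using nth_reflect_from_hitting_time[OF assms(2)] hitting_time(2)[OF assms(2)] i by simp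
  moreover obtain j where j: "j < mid" "W ! Suc i = ps ! j"
    using before_hitting_time(1)[OF assms(1)] lt i by force
  then have "reflect W ! i = mirror (ps ! j)" using nth_reflect \<open>Suc i < length W\<close> lt i by simp
  ultimately have "mirror (ps ! j) = mirror (ps ! mid)" using assms(3) mirror_mid by simp
  then show False using mirror_inj[of j mid] j(1) mid_le_k by simp
qed

lemma inj_on_reflect: "inj_on reflect (off_path_walks l (ps ! 0))"
proof (rule inj_onI)
  fix W W' assume W: "W \<in> off_path_walks l (ps ! 0)" and W': "W' \<in> off_path_walks l (ps ! 0)"
    and eq: "reflect W = reflect W'"
  have t: "hitting_time W = hitting_time W'"
    using reflect_hitting_time_mono[OF W W' eq] reflect_hitting_time_mono[OF W' W eq[symmetric]]
    by simp
  have len: "length W = Suc l" "length W' = Suc l" using W W' by (auto simp: walks_from_def)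
  show "W = W'"
  proof (rule nth_equalityI)
    show "length W = length W'" using len by simp
    fix n assume "n < length W"
    show "W ! n = W' ! n"
    proof (cases n)
      case 0
      then show ?thesis using W W' by (cases W; cases W') (auto simp: walks_from_def is_walk_def)
    next
      case (Suc i)
      have same: "reflect W ! i = reflect W' ! i" using eq by simp
      show ?thesis
      proof (cases "n \<le> hitting_time W")
        case True
        obtain j where j: "j \<le> mid" "W ! n = ps ! j" using up_to_hitting_time[OF W True] by blast
        obtain j' where j': "j' \<le> mid" "W' ! n = ps ! j'"
          using up_to_hitting_time[OF W'] True t by auto
        have "mirror (ps ! j) = mirror (ps ! j')"
          using same nth_reflect[of i W] nth_reflect[of i W'] True t j j' Suc \<open>n < length W\<close> len
          by simp
        then have "j = j'" using mirror_inj j(1) j'(1) mid_le_k by simp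
        then show ?thesis using j(2) j'(2) by simp
      next
        case False
        then show ?thesis
          using same nth_reflect[of i W] nth_reflect[of i W'] t Suc \<open>n < length W\<close> len by simp
      qed
    qed
  qed
qed

lemma card_off_path_walks_le:
  assumes "1 \<le> l"
  shows "card (off_path_walks l (ps ! 0)) \<le> card (off_path_walks (l - 1) (ps ! k))"
proof (rule card_inj_on_le[OF inj_on_reflect])
  show "reflect ` off_path_walks l (ps ! 0) \<subseteq> off_path_walks (l - 1) (ps ! k)"
  proof
    fix R assume "R \<in> reflect ` off_path_walks l (ps ! 0)"
    then obtain W where W: "W \<in> off_path_walks l (ps ! 0)" "R = reflect W" by blast
    have "length (reflect W) = Suc (l - 1)" using W(1) assms by (auto simp: length_reflect walks_from_def)
    then show "R \<in> off_path_walks (l - 1) (ps ! k)"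
      using reflect_walk[OF W(1) assms] hd_reflect[OF W(1) assms] reflect_off_path[OF W(1)] W(2)
      by (simp add: walks_from_def)
  qed
  show "finite (off_path_walks (l - 1) (ps ! k))" using finite_walks_from[OF finite_BP] by blast
qed

end

theorem lemma2:
  fixes V :: "'a set" and E :: "'a set set" and ps :: "'a list" and k l :: nat
  assumes tree: "is_tree V E"
    and path: "is_path V E ps" and len: "length ps = Suc k" and k1: "k \<ge> 1"
    and deg2: "\<forall>i. 1 \<le> i \<and> i \<le> k - 1 \<longrightarrow> degree E (ps ! i) = 2"
    and B_def: "B = component V (E - path_edges ps) (ps ! k)"
    and B_nontriv: "B \<noteq> {ps ! k}"
    and kodd: "odd k"
    and l1: "l \<ge> 1"
  shows "int (walks_count l (ps ! 0) (B \<union> set ps) (induced_edges E (B \<union> set ps)))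
           - int (walks_count l (ps ! 0) (set ps) (path_edges ps))
         \<le> int (walks_count (l - 1) (ps ! k) (B \<union> set ps) (induced_edges E (B \<union> set ps)))
           - int (walks_count (l - 1) (ps ! k) (set ps) (path_edges ps))"
proof -
  interpret bare_path_in_tree V E ps k B
    using tree path len k1 deg2 B_def by unfold_locales
  obtain u where "u \<in> B" "{ps ! k, u} \<in> E" "u \<notin> set ps"
    using branch_neighbour_exists[OF B_nontriv] by blast
  then interpret bare_path_reflection V E ps k B u
    using kodd by unfold_locales
  have "set ps \<subseteq> B \<union> set ps" by blast
  note subgraph = walks_count_subgraph[OF finite_BP this path_edges_subset_EBP]
  show ?thesis using card_off_path_walks_le[OF l1] by (simp only: subgraph of_nat_le_iff)
qed

end
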